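(* Let $(t_1,h_1),(t_2,h_2)\in\mathbb R\times\mathbb R^+$ with $t_2\le t_1$, and suppose the curves $t\mapsto((t-t_1)^2+h_1^2)^{1/2}$ and $t\mapsto((t-t_2)^2+h_2^2)^{1/2}$ intersect at $(0,\hat h_0)$, $\hat h_0>0$. For $t\ge0$ let $\hat h_t=((t-t_1)^2+h_1^2)^{1/2}$ and $U^s_r=\{(x,y):y>0,(x-s)^2+y^2<r^2\}$. Then the collection of sets $\{U^t_{\hat h_t}\setminus U^0_{\hat h_0}\}_{t\ge0}$ is increasing in $t$. *)

theory Defs
  imports Complex_Main
begin

definition halfdisc :: "real \<Rightarrow> real \<Rightarrow> (real \<times> real) set" where
  "halfdisc s r = {(x, y). y > 0 \<and> (x - s)^2 + y^2 < r^2}"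

end

theory Submission
  imports Defs
begin

text \<open>The circles centred at \<open>(s, 0)\<close> with squared radius \<open>(s - c)\<^sup>2 + k\<close> form a pencil: the
  power of a point \<open>(x, y)\<close> with respect to them is affine in \<open>s\<close>, namely
  \<open>x\<^sup>2 + y\<^sup>2 - (c\<^sup>2 + k) - 2 s (x - c)\<close>. A point outside the circle of the pencil at \<open>s = 0\<close>
  but inside the one at some \<open>s \<ge> 0\<close> therefore has \<open>x > c\<close>, so its power decreases in \<open>s\<close>
  and it stays inside all later circles.\<close>

lemma pencil_power_eq:
  fixes x y s c k :: real
  shows "(x - s)\<^sup>2 + y\<^sup>2 - ((s - c)\<^sup>2 + k) = x\<^sup>2 + y\<^sup>2 - (c\<^sup>2 + k) - 2 * s * (x - c)"
  by (simp add: power2_eq_square algebra_simps)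

lemma pencil_disc_mono:
  fixes x y s t c k :: real
  assumes outside: "c\<^sup>2 + k \<le> x\<^sup>2 + y\<^sup>2"
    and inside: "(x - s)\<^sup>2 + y\<^sup>2 < (s - c)\<^sup>2 + k"
    and "0 \<le> s" and "s \<le> t"
  shows "(x - t)\<^sup>2 + y\<^sup>2 < (t - c)\<^sup>2 + k"
proof -
  have "0 < s * (x - c)"
    using inside outside pencil_power_eq[of x s y c k] by linarith
  with \<open>0 \<le> s\<close> have "0 < x - c"
    by (simp add: zero_less_mult_iff)
  with \<open>s \<le> t\<close> have "s * (x - c) \<le> t * (x - c)"
    by (simp add: mult_right_mono)
  then show ?thesis
    using inside pencil_power_eq[of x s y c k] pencil_power_eq[of x t y c k] by linarith
qed

lemma mem_halfdisc_sqrt_iff: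
  assumes "0 \<le> a"
  shows "(x, y) \<in> halfdisc s (sqrt a) \<longleftrightarrow> 0 < y \<and> (x - s)\<^sup>2 + y\<^sup>2 < a"
  using assms by (simp add: halfdisc_def)

theorem lemma5p13:
  fixes t1 h1 t2 h2 h0 :: real
  assumes "h1 > 0" and "h2 > 0" and "t2 \<le> t1"
    and "h0 > 0"
    and "sqrt ((0 - t1)^2 + h1^2) = h0"
    and "sqrt ((0 - t2)^2 + h2^2) = h0"
  shows "\<forall>s t. 0 \<le> s \<and> s \<le> t \<longrightarrow>
           halfdisc s (sqrt ((s - t1)^2 + h1^2)) - halfdisc 0 h0
             \<subseteq> halfdisc t (sqrt ((t - t1)^2 + h1^2)) - halfdisc 0 h0"
proof (intro allI impI subsetI)
  fix s t :: real and p :: "real \<times> real"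
  assume st: "0 \<le> s \<and> s \<le> t"
    and p: "p \<in> halfdisc s (sqrt ((s - t1)^2 + h1^2)) - halfdisc 0 h0"
  obtain x y where p_eq: "p = (x, y)" by (cases p)
  have h0_eq: "h0 = sqrt ((0 - t1)\<^sup>2 + h1\<^sup>2)"
    using assms(5) by simp
  from p have "0 < y" and inside: "(x - s)\<^sup>2 + y\<^sup>2 < (s - t1)\<^sup>2 + h1\<^sup>2"
    and outside: "t1\<^sup>2 + h1\<^sup>2 \<le> x\<^sup>2 + y\<^sup>2"
    by (auto simp: p_eq h0_eq mem_halfdisc_sqrt_iff)
  with st have "(x - t)\<^sup>2 + y\<^sup>2 < (t - t1)\<^sup>2 + h1\<^sup>2"
    by (blast intro: pencil_disc_mono)
  with \<open>0 < y\<close> outside show "p \<in> halfdisc t (sqrt ((t - t1)^2 + h1^2)) - halfdisc 0 h0"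
    by (simp add: p_eq h0_eq mem_halfdisc_sqrt_iff)
qed

end
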